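(* Let $A=\{[x_i^a,y_i^a]\}_{i=1}^{n_a}$ and $B=\{[x_i^b,y_i^b]\}_{i=1}^{n_b}$ be persistence barcodes in $\mathcal{B}_F$ with $L_a,L_b>0$. If $r_\infty(A,B)\le 1/4$, then $$\|S(A)-S(B)\|_1\le -2L_{\min}\,r_\infty(A,B)\log\big(2r_\infty(A,B)\big)+2d_\infty(A,B)\log n_{\max}\le 2r_\infty(A,B)\left(-L_{\min}\log\big(2r_\infty(A,B)\big)+L_{\max}\frac{\log n_{\max}}{n_{\max}}\right).$$
   Context: A persistence barcode is a finite multiset of intervals $[x,y]$, $x\le y$; $\mathcal{B}_F$ is the set of barcodes all of whose intervals have finite endpoints. For $A$ write $\ell_i^a=y_i^a-x_i^a$, $L_a=\sum_i\ell_i^a$; similarly for $B$; $n_{\max}=\max\{n_a,n_b\}$, $L_{\max}=\max\{L_a,L_b\}$, $L_{\min}=\min\{L_a,L_b\}$. Bottleneck distance: pad the smaller barcode with zero-length intervals $[t,t]$ so both have $n_{\max}$ intervals, and $d_\infty(A,B)=\min_\gamma\max_i\max\{|x_i^a-x^b_{\gamma(i)}|,|y_i^a-y^b_{\gamma(i)}|\}$ over bijections $\gamma$ (and paddings). Relative error: $r_\infty(A,B)=2n_{\max}d_\infty(A,B)/L_{\max}$. The entropy summary function of $A$ is the step function $S(A):\mathbb{R}\to\mathbb{R}$, $S(A)[t]=-\sum_{i=1}^{n_a}w_i^a(t)\frac{\ell_i^a}{L_a}\log\frac{\ell_i^a}{L_a}$, where $w_i^a(t)=1$ if $x_i^a\le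 t\le y_i^a$ and $0$ otherwise (convention $0\log0=0$). $\|h\|_1=\int_{\mathbb{R}}|h(t)|\,dt$. *)

theory Defs
  imports "HOL-Analysis.Analysis"
begin

(* A barcode is a finite multiset of intervals [x,y], represented as a list of
   endpoint pairs (x,y) (order irrelevant for all notions below). *)
type_synonym barcode = "(real \<times> real) list"

definition is_barcode :: "barcode \<Rightarrow> bool" where
  "is_barcode A \<longleftrightarrow> (\<forall>p\<in>set A. fst p \<le> snd p)"

definition bar_len :: "real \<times> real \<Rightarrow> real" where
  "bar_len p = snd p - fst p"

definition total_len :: "barcode \<Rightarrow> real" where
  "total_len A = (\<Sum>i<length A. bar_len (A ! i))"

definition paddings :: "barcode \<Rightarrow> nat \<Rightarrow> barcode set" where
  "paddings A n = {A @ map (\<lambda>t. (t, t)) ts | ts. length A + length ts = n}"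

definition match_cost :: "nat \<Rightarrow> barcode \<Rightarrow> barcode \<Rightarrow> (nat \<Rightarrow> nat) \<Rightarrow> real" where
  "match_cost n A B \<gamma> = (MAX i\<in>{..<n}.
      max \<bar>fst (A ! i) - fst (B ! \<gamma> i)\<bar> \<bar>snd (A ! i) - snd (B ! \<gamma> i)\<bar>)"

definition d_inf :: "barcode \<Rightarrow> barcode \<Rightarrow> real" where
  "d_inf A B = (let n = max (length A) (length B) in
     Inf {match_cost n A' B' \<gamma> | A' B' \<gamma>.
            A' \<in> paddings A n \<and> B' \<in> paddings B n \<and> \<gamma> permutes {..<n}})"

definition r_inf :: "barcode \<Rightarrow> barcode \<Rightarrow> real" where
  "r_inf A B = 2 * real (max (length A) (length B)) * d_inf A B
                 / max (total_len A) (total_len B)"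

definition entropy_summary :: "barcode \<Rightarrow> real \<Rightarrow> real" where
  "entropy_summary A t = - (\<Sum>i<length A.
      (if fst (A ! i) \<le> t \<and> t \<le> snd (A ! i) then
         (let q = bar_len (A ! i) / total_len A in if q = 0 then 0 else q * ln q)
       else 0))"

definition L1_norm :: "(real \<Rightarrow> real) \<Rightarrow> real" where
  "L1_norm h = (\<integral>t. \<bar>h t\<bar> \<partial>lborel)"

end

theory Submission
  imports Defs
begin

(* Pad both barcodes with zero-length bars and fix an optimal matching: the padding changes
   neither total lengths nor entropy summaries, and the infimum defining d_inf is attained
   by placing each padding bar on the diagonal point nearest to its partner.  After this,
   bar i of A is within d = d_inf A B of bar i of B in both endpoints.  Writing the
   summaries as sums of h(p_i) and h(q_i) times indicators of the bars, with h x = - x ln x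
   and p_i, q_i the relative lengths, the L1 distance splits into a part from the moved
   endpoints, at most 2 d sum_i h(p_i) <= 2 d ln n, and a part from the changed weights.
   The relative lengths are perturbed by at most r/2 upwards and r/2 + q_i r downwards,
   which forces |h(p_i) - h(q_i)| <= h(2 r); summing against the bar lengths gives
   L_min h(2 r).  The second inequality is 2 d ln n <= 4 d ln n, as r = 2 n d / L_max. *)

section \<open>The entropy function\<close>

definition entr :: "real \<Rightarrow> real" where
  "entr x = - x * ln x"

lemma entr_0 [simp]: "entr 0 = 0"
  by (simp add: entr_def)

lemma entr_nonneg: "0 \<le> x \<Longrightarrow> x \<le> 1 \<Longrightarrow> 0 \<le> entr x"
  unfolding entr_def by (cases "x = 0") (auto intro: mult_nonneg_nonpos)

lemma entr_add_le:
  assumes "0 \<le> a" "0 \<le> b" shows "entr (a + b) \<le> entr a + entr b"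
proof (cases "a = 0 \<or> b = 0")
  case False
  then have "a > 0" "b > 0" using assms by auto
  then have "a * ln a + b * ln b \<le> a * ln (a + b) + b * ln (a + b)"
    by (intro add_mono mult_left_mono) auto
  then show ?thesis unfolding entr_def by (simp add: algebra_simps)
qed auto

lemma entr_le_tangent:
  assumes "0 \<le> a" "0 < b" shows "entr a \<le> entr b + (- 1 - ln b) * (a - b)"
proof (cases "a = 0")
  case False
  then have a: "a > 0" using assms by auto
  have "a * (ln b - ln a) = a * ln (b / a)" using a assms by (simp add: ln_div)
  also have "\<dots> \<le> a * (b / a - 1)"
    using a assms by (intro mult_left_mono ln_le_minus_one) auto
  also have "\<dots> = b - a" using a by (simp add: field_simps)
  finally have "a * (ln b - ln a) \<le> b - a" .
  then show ?thesis unfolding entr_def by (simp add: algebra_simps)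
qed (use assms in \<open>simp add: entr_def algebra_simps\<close>)

lemma entr_mono:
  assumes "0 \<le> a" "a \<le> b" "b \<le> exp (- 1)" shows "entr a \<le> entr b"
proof (cases "b = 0")
  case False
  then have b: "b > 0" using assms by auto
  have "ln b \<le> ln (exp (- 1))" using b assms by (subst ln_le_cancel_iff) auto
  then have "ln b \<le> - 1" by simp
  then have "(- 1 - ln b) * (a - b) \<le> 0" using assms by (intro mult_nonneg_nonpos) auto
  then show ?thesis using entr_le_tangent[OF assms(1) b] by simp
qed (use assms in auto)

lemma entr_le_entr_double:
  assumes "0 \<le> r" "r \<le> 1/4" shows "entr r \<le> entr (2 * r)"
proof (cases "r = 0")
  case False
  then have r: "r > 0" using assms by auto
  have "ln 2 + ln (2 * r) = ln (4 * r)" using r ln_mult[of 2 "2 * r"] by simp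
  also have "\<dots> \<le> 0" using r assms by simp
  finally have "2 * ln (2 * r) \<le> ln r" using r by (simp add: ln_mult)
  then have "r * (2 * ln (2 * r)) \<le> r * ln r" using r by (intro mult_left_mono) auto
  then show ?thesis unfolding entr_def by (simp add: algebra_simps)
qed simp

lemma entr_diff_le_half_sq_diff:
  assumes "0 \<le> p" "p \<le> q" "q \<le> 1" shows "entr p - entr q \<le> (q\<^sup>2 - p\<^sup>2) / 2"
proof -
  \<comment> \<open>\<open>t \<mapsto> t ln t - t\<^sup>2/2\<close> has derivative \<open>ln t + 1 - t \<le> 0\<close>\<close>
  have "q * ln q - q\<^sup>2 / 2 \<le> p * ln p - p\<^sup>2 / 2"
  proof (cases "p = 0")
    case True
    have "q * ln q \<le> 0" using assms by (cases "q = 0") (auto intro: mult_nonneg_nonpos)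
    moreover have "0 \<le> q\<^sup>2 / 2" by simp
    moreover have "p * ln p - p\<^sup>2 / 2 = 0" using True by simp
    ultimately show ?thesis by linarith
  next
    case False
    with assms have p: "p > 0" by simp
    show ?thesis
    proof (rule DERIV_nonpos_imp_nonincreasing[OF assms(2)])
      fix x assume x: "p \<le> x" "x \<le> q"
      with p have "x > 0" by simp
      then have "((\<lambda>t. t * ln t - t\<^sup>2 / 2) has_real_derivative ln x + 1 - x) (at x)"
        by (auto intro!: derivative_eq_intros simp: field_simps power2_eq_square)
      moreover have "ln x + 1 - x \<le> 0" using ln_le_minus_one[OF \<open>x > 0\<close>] by simp
      ultimately show "\<exists>y. ((\<lambda>t. t * ln t - t\<^sup>2 / 2) has_real_derivative y) (at x) \<and> y \<le> 0"
        by blast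
    qed
  qed
  then show ?thesis unfolding entr_def by (simp add: algebra_simps)
qed

lemma entr_ge_mult_ln2:
  assumes "0 \<le> x" "x \<le> 1/2" shows "x * ln 2 \<le> entr x"
proof (cases "x = 0")
  case False
  then have x: "x > 0" using assms by simp
  have "ln 2 + ln x = ln (2 * x)" using x ln_mult[of 2 x] by simp
  also have "\<dots> \<le> 0" using x assms by simp
  finally have "x * ln 2 \<le> x * (- ln x)" using x by (intro mult_left_mono) auto
  then show ?thesis unfolding entr_def by simp
qed simp

lemma entr_ge_three_quarters_mult:
  assumes "0 \<le> x" "x \<le> 2/5" shows "3/4 * x \<le> entr x"
proof (cases "x = 0")
  case False
  then have x: "x > 0" using assms by simp
  have "ln (4/5 :: real) \<le> 4/5 - 1" by (rule ln_le_minus_one) simp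
  then have "1/5 \<le> ln (5/4 :: real)" by (simp add: ln_div)
  moreover have "ln (5/2 :: real) = ln 2 + ln (5/4)" using ln_mult[of 2 "5/4"] by simp
  ultimately have "3/4 \<le> ln (5/2 :: real)" using ln2_ge_two_thirds by simp
  moreover have "ln x \<le> ln (2/5)" using x assms by simp
  ultimately have "3/4 \<le> - ln x" by (simp add: ln_div)
  then have "x * (3/4) \<le> x * (- ln x)" using x by (intro mult_left_mono) auto
  then show ?thesis unfolding entr_def by simp
qed simp

lemma entr_ge_two_thirds_mult:
  assumes "0 \<le> x" "x \<le> 1/2" shows "2/3 * x \<le> entr x"
  using entr_ge_mult_ln2[OF assms] mult_left_mono[OF ln2_ge_two_thirds assms(1)] by simp

lemma quarter_le_exp_minus_one: "1/4 \<le> exp (- 1 :: real)"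
  using exp_le by (simp add: exp_minus field_simps)

lemma abs_entr_diff_le_entr_double_of_ge:
  assumes q: "0 \<le> q" "q \<le> p" "p \<le> 1" and up: "p \<le> q + r/2" and r: "0 < r" "r \<le> 1/4"
  shows "\<bar>entr p - entr q\<bar> \<le> entr (2 * r)"
proof -
  define s where "s = p - q"
  have s: "0 \<le> s" "s \<le> r/2" using q up by (auto simp: s_def)
  have "entr p \<le> entr q + entr s" using entr_add_le[of q s] q s by (simp add: s_def)
  also have "entr s \<le> entr r"
    using s r quarter_le_exp_minus_one by (intro entr_mono) auto
  also have "entr r \<le> entr (2 * r)" using r by (intro entr_le_entr_double) auto
  finally have inc: "entr p - entr q \<le> entr (2 * r)" by simp
  have "entr q - entr p \<le> (p\<^sup>2 - q\<^sup>2) / 2" using entr_diff_le_half_sq_diff q by simp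
  also have "\<dots> = s * ((p + q) / 2)" by (simp add: s_def power2_eq_square algebra_simps)
  also have "\<dots> \<le> s * 1" using s q by (intro mult_left_mono) auto
  also have "\<dots> \<le> 2/3 * (2 * r)" using s r by simp
  also have "\<dots> \<le> entr (2 * r)" using r by (intro entr_ge_two_thirds_mult) auto
  finally show ?thesis using inc by linarith
qed

lemma half_sq_diff_le_of_fifth_lt:
  fixes p q r :: real
  assumes p: "0 \<le> p" "p \<le> q" "q \<le> 1" and lo: "q - r/2 - q * r \<le> p"
    and r: "1/5 < r" "r \<le> 1/4"
  shows "(q\<^sup>2 - p\<^sup>2) / 2 \<le> 4/3 * r"
proof -
  define S where "S = r * (1/2 + q)"
  have qS: "q - S \<le> p" using lo by (simp add: S_def algebra_simps)
  show ?thesis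
  proof (cases "S \<le> q")
    case True
    \<comment> \<open>the square \<open>S\<^sup>2/2\<close> is kept: with \<open>r > 1/5\<close> it pushes the bound below \<open>4r/3\<close>\<close>
    have "(q - S)\<^sup>2 \<le> p\<^sup>2" using True qS by (intro power_mono) auto
    then have "(q\<^sup>2 - p\<^sup>2) / 2 \<le> (q\<^sup>2 - (q - S)\<^sup>2) / 2" by simp
    also have "\<dots> = r * ((1/2 + q) * q - r/2 * (1/2 + q)\<^sup>2)"
      unfolding S_def power2_eq_square by (simp add: field_simps)
    also have "\<dots> \<le> r * ((1/2 + q) * q - 1/10 * (1/2 + q)\<^sup>2)"
      using r by (intro mult_left_mono diff_left_mono mult_right_mono) auto
    also have "\<dots> \<le> r * (4/3)"
    proof (intro mult_left_mono)
      have "q * q \<le> 1" using p by (simp add: mult_le_one)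
      then show "(1/2 + q) * q - 1/10 * (1/2 + q)\<^sup>2 \<le> 4/3"
        using p by (simp add: power2_eq_square algebra_simps)
    qed (use r in auto)
    finally show ?thesis by simp
  next
    case False
    then have "q * (1 - r) \<le> r / 2" by (simp add: S_def algebra_simps)
    also have "\<dots> \<le> 2/3 * r * (1 - r)"
    proof -
      have "r * r \<le> r * (1/4)" using r by (intro mult_left_mono) auto
      then show ?thesis by (simp add: algebra_simps)
    qed
    finally have "q * (1 - r) \<le> 2/3 * r * (1 - r)" .
    then have "q \<le> 2/3 * r" using r by simp
    have "q\<^sup>2 - p\<^sup>2 \<le> q"
      using p by (smt (verit) mult_left_le power2_eq_square zero_le_power2)
    then have "(q\<^sup>2 - p\<^sup>2) / 2 \<le> q / 2" by simp
    also have "\<dots> \<le> 4/3 * r" using \<open>q \<le> 2/3 * r\<close> r by simp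
    finally show ?thesis .
  qed
qed

lemma entr_decrease_le_entr_double:
  assumes p: "0 \<le> p" "p \<le> q" "q \<le> 1" and lo: "q - r/2 - q * r \<le> p" and r: "0 < r" "r \<le> 1/4"
  shows "entr p - entr q \<le> entr (2 * r)"
proof -
  have "(q\<^sup>2 - p\<^sup>2) / 2 \<le> entr (2 * r)"
  proof (cases "r \<le> 1/5")
    case True
    have "q * r \<le> r" using p r by (intro mult_left_le_one_le) auto
    have "(q\<^sup>2 - p\<^sup>2) / 2 = (q - p) * ((q + p) / 2)" by (simp add: power2_eq_square algebra_simps)
    also have "\<dots> \<le> (q - p) * 1" using p by (intro mult_left_mono) auto
    also have "\<dots> \<le> 3/4 * (2 * r)" using lo \<open>q * r \<le> r\<close> by simp
    also have "\<dots> \<le> entr (2 * r)" using r True by (intro entr_ge_three_quarters_mult) auto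
    finally show ?thesis .
  next
    case False
    then have "(q\<^sup>2 - p\<^sup>2) / 2 \<le> 2/3 * (2 * r)"
      using half_sq_diff_le_of_fifth_lt[OF p lo _ r(2)] by simp
    also have "\<dots> \<le> entr (2 * r)" using r by (intro entr_ge_two_thirds_mult) auto
    finally show ?thesis .
  qed
  then show ?thesis using entr_diff_le_half_sq_diff[OF p] by linarith
qed

lemma entr_increase_le_entr_double:
  assumes p: "0 \<le> p" "p \<le> q" "q \<le> 1" and lo: "q - r/2 - q * r \<le> p" and r: "0 < r" "r \<le> 1/4"
  shows "entr q - entr p \<le> entr (2 * r)"
proof (cases "q \<le> 1/2")
  case True
  define s where "s = q - p"
  have "q * r \<le> 1/2 * r" using True r by (intro mult_right_mono) auto
  then have s: "0 \<le> s" "s \<le> r" using p lo by (auto simp: s_def)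
  have "entr q \<le> entr p + entr s" using entr_add_le[of p s] p s by (simp add: s_def)
  also have "entr s \<le> entr r"
    using s r quarter_le_exp_minus_one by (intro entr_mono) auto
  also have "entr r \<le> entr (2 * r)" using r by (intro entr_le_entr_double) auto
  finally show ?thesis by simp
next
  case False
  \<comment> \<open>now \<open>p \<ge> 1/4\<close>, where the slope \<open>-1 - ln p\<close> of \<open>entr\<close> is at most \<open>2 ln 2 - 1\<close>\<close>
  have "1/2 * (1 - r) \<le> q * (1 - r)" using False r by (intro mult_right_mono) auto
  then have "1/2 - 1/2 * r \<le> q - q * r" by (simp only: right_diff_distrib mult_1_right)
  then have p4: "1/4 \<le> p" using lo r by linarith
  have "ln (1/4) \<le> ln p" using p4 by simp
  moreover have "ln (1/4 :: real) = - (2 * ln 2)" using ln_mult[of 2 2] by (simp add: ln_div)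
  ultimately have slope: "- 1 - ln p \<le> 2 * ln 2 - 1" by simp
  have "q * r \<le> r" using p r by (intro mult_left_le_one_le) auto
  then have "q - p \<le> 3/2 * r" using lo by simp
  have "entr q - entr p \<le> (- 1 - ln p) * (q - p)" using entr_le_tangent[of q p] p p4 by simp
  also have "\<dots> \<le> (2 * ln 2 - 1) * (q - p)" using slope p by (intro mult_right_mono) auto
  also have "\<dots> \<le> (2 * ln 2 - 1) * (3/2 * r)"
    using \<open>q - p \<le> 3/2 * r\<close> ln2_ge_two_thirds by (intro mult_left_mono) auto
  also have "\<dots> \<le> 2 * r * ln 2"
    using mult_left_mono[OF ln_2_less_1[THEN less_imp_le], of r] r by (simp add: algebra_simps)
  also have "\<dots> \<le> entr (2 * r)" using entr_ge_mult_ln2[of "2 * r"] r by simp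
  finally show ?thesis .
qed

lemma abs_entr_diff_le_entr_double:
  assumes "0 \<le> p" "p \<le> 1" "0 \<le> q" "q \<le> 1" "0 \<le> r" "r \<le> 1/4"
    and "p \<le> q + r/2" "q - r/2 - q * r \<le> p"
  shows "\<bar>entr p - entr q\<bar> \<le> entr (2 * r)"
proof (cases "r = 0")
  case False
  with assms show ?thesis
    using abs_entr_diff_le_entr_double_of_ge[of q p r]
      entr_decrease_le_entr_double[of p q r] entr_increase_le_entr_double[of p q r]
    by (cases "q \<le> p") auto
qed (use assms in simp)

lemma sum_entr_le_ln:
  fixes p :: "nat \<Rightarrow> real"
  assumes "0 < n" "\<And>i. i < n \<Longrightarrow> 0 \<le> p i" "(\<Sum>i<n. p i) = 1"
  shows "(\<Sum>i<n. entr (p i)) \<le> ln n"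
proof -
  have "entr (p i) - p i * ln n \<le> 1 / n - p i" if i: "i < n" for i
  proof (cases "p i = 0")
    case False
    with assms(2)[OF i] have pi: "p i > 0" by simp
    have "entr (p i) - p i * ln n = p i * ln (1 / (n * p i))"
      using pi assms(1) by (simp add: entr_def ln_div ln_mult algebra_simps)
    also have "\<dots> \<le> p i * (1 / (n * p i) - 1)"
      using pi assms(1) by (intro mult_left_mono ln_le_minus_one) auto
    also have "\<dots> = 1 / n - p i" using pi by (simp add: field_simps)
    finally show ?thesis .
  qed simp
  then have "(\<Sum>i<n. entr (p i) - p i * ln n) \<le> (\<Sum>i<n. 1 / n - p i)" by (intro sum_mono) auto
  then show ?thesis using assms by (simp add: sum_subtractf sum_distrib_right[symmetric])
qed

section \<open>Entropy summaries\<close>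

lemma integrable_indicator_Icc [simp]: "integrable lborel (indicator {a..b} :: real \<Rightarrow> real)"
  by (rule integrable_real_indicator) (auto simp: emeasure_lborel_Icc_eq)

lemma abs_weighted_indicator_diff_le:
  fixes \<alpha> \<beta> x y x' y' t :: real
  assumes "0 \<le> \<alpha>"
  shows "\<bar>\<alpha> * indicator {x..y} t - \<beta> * indicator {x'..y'} t\<bar>
    \<le> \<alpha> * (indicator {min x x'..max x x'} t + indicator {min y y'..max y y'} t)
       + \<bar>\<alpha> - \<beta>\<bar> * indicator {x'..y'} t"
  using assms by (auto simp: indicator_def)

lemma L1_norm_sum_indicator_diff_le:
  fixes \<alpha> \<beta> x y x' y' :: "nat \<Rightarrow> real"
  assumes "\<And>i. i < n \<Longrightarrow> 0 \<le> \<alpha> i" "\<And>i. i < n \<Longrightarrow> x' i \<le> y' i"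
  shows "L1_norm (\<lambda>t. \<Sum>i<n. \<alpha> i * indicator {x i..y i} t - \<beta> i * indicator {x' i..y' i} t)
     \<le> (\<Sum>i<n. \<alpha> i * (\<bar>x i - x' i\<bar> + \<bar>y i - y' i\<bar>) + \<bar>\<alpha> i - \<beta> i\<bar> * (y' i - x' i))"
proof -
  define F where "F i t = \<alpha> i * (indicator {min (x i) (x' i)..max (x i) (x' i)} t
      + indicator {min (y i) (y' i)..max (y i) (y' i)} t) + \<bar>\<alpha> i - \<beta> i\<bar> * indicator {x' i..y' i} t"
    for i t
  have F: "integrable lborel (F i)" for i unfolding F_def by simp
  have "L1_norm (\<lambda>t. \<Sum>i<n. \<alpha> i * indicator {x i..y i} t - \<beta> i * indicator {x' i..y' i} t)
      \<le> (\<integral>t. (\<Sum>i<n. F i t) \<partial>lborel)"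
    unfolding L1_norm_def
  proof (rule integral_mono')
    show "integrable lborel (\<lambda>t. \<Sum>i<n. F i t)" using F by simp
    fix t
    have "\<bar>\<Sum>i<n. \<alpha> i * indicator {x i..y i} t - \<beta> i * indicator {x' i..y' i} t\<bar>
        \<le> (\<Sum>i<n. \<bar>\<alpha> i * indicator {x i..y i} t - \<beta> i * indicator {x' i..y' i} t\<bar>)"
      by (rule sum_abs)
    also have "\<dots> \<le> (\<Sum>i<n. F i t)"
      unfolding F_def using assms by (intro sum_mono abs_weighted_indicator_diff_le) auto
    finally show "\<bar>\<Sum>i<n. \<alpha> i * indicator {x i..y i} t - \<beta> i * indicator {x' i..y' i} t\<bar>
        \<le> (\<Sum>i<n. F i t)" .
    show "0 \<le> (\<Sum>i<n. F i t)"
      unfolding F_def using assms by (intro sum_nonneg add_nonneg_nonneg mult_nonneg_nonneg) auto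
  qed
  also have "\<dots> = (\<Sum>i<n. \<integral>t. F i t \<partial>lborel)" by (intro Bochner_Integration.integral_sum F)
  also have "\<dots> = (\<Sum>i<n. \<alpha> i * (\<bar>x i - x' i\<bar> + \<bar>y i - y' i\<bar>) + \<bar>\<alpha> i - \<beta> i\<bar> * (y' i - x' i))"
    using assms(2) by (intro sum.cong refl) (simp add: F_def abs_if)
  finally show ?thesis .
qed

lemma sum_nth_eq_sum_list: "(\<Sum>i<length xs. f (xs ! i)) = (\<Sum>x\<leftarrow>xs. f x)"
  by (simp add: sum_list_sum_nth atLeast0LessThan)

lemma sum_list_map_permute_list:
  fixes f :: "'a \<Rightarrow> 'b :: comm_monoid_add"
  shows "\<sigma> permutes {..<length xs} \<Longrightarrow> (\<Sum>x\<leftarrow>permute_list \<sigma> xs. f x) = (\<Sum>x\<leftarrow>xs. f x)"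
  by (simp flip: sum_mset_sum_list)

lemma total_len_eq_sum_list: "total_len A = (\<Sum>a\<leftarrow>A. bar_len a)"
  unfolding total_len_def sum_nth_eq_sum_list ..

lemma entropy_summary_eq_sum_indicator:
  "entropy_summary A t =
    (\<Sum>i<length A. entr (bar_len (A ! i) / total_len A) * indicator {fst (A ! i)..snd (A ! i)} t)"
  unfolding entropy_summary_def
  by (subst sum_negf[symmetric], intro sum.cong refl) (simp add: entr_def indicator_def Let_def)

lemma entropy_summary_eq_sum_list:
  "entropy_summary A t = (\<Sum>a\<leftarrow>A. entr (bar_len a / total_len A) * indicator {fst a..snd a} t)"
  unfolding entropy_summary_eq_sum_indicator
  by (rule sum_nth_eq_sum_list[where f = "\<lambda>a. entr (bar_len a / total_len A) * indicator {fst a..snd a} t"])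

lemma is_barcode_append_diagonal:
  "is_barcode A \<Longrightarrow> is_barcode (A @ map (\<lambda>t. (t, t)) ts)"
  unfolding is_barcode_def by auto

lemma total_len_append_diagonal: "total_len (A @ map (\<lambda>t. (t, t)) ts) = total_len A"
  unfolding total_len_eq_sum_list by (simp add: bar_len_def comp_def)

lemma entropy_summary_append_diagonal:
  "entropy_summary (A @ map (\<lambda>t. (t, t)) ts) = entropy_summary A"
  unfolding entropy_summary_eq_sum_list total_len_append_diagonal
  by (simp add: bar_len_def comp_def)

lemma is_barcode_permute_list:
  "\<sigma> permutes {..<length A} \<Longrightarrow> is_barcode A \<Longrightarrow> is_barcode (permute_list \<sigma> A)"
  unfolding is_barcode_def by simp

lemma total_len_permute_list:
  "\<sigma> permutes {..<length A} \<Longrightarrow> total_len (permute_list \<sigma> A) = total_len A"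
  unfolding total_len_eq_sum_list by (rule sum_list_map_permute_list)

lemma entropy_summary_permute_list:
  "\<sigma> permutes {..<length A} \<Longrightarrow> entropy_summary (permute_list \<sigma> A) = entropy_summary A"
  unfolding entropy_summary_eq_sum_list fun_eq_iff total_len_permute_list
  by (simp add: sum_list_map_permute_list)

section \<open>Barcodes matched bar by bar\<close>

definition bar_dist :: "real \<times> real \<Rightarrow> real \<times> real \<Rightarrow> real" where
  "bar_dist a b = max \<bar>fst a - fst b\<bar> \<bar>snd a - snd b\<bar>"

lemma relative_length_bounds:
  fixes l l' :: "nat \<Rightarrow> real" and L M c r :: real
  assumes n: "0 < n" and i: "i < n"
    and l'_nonneg: "\<And>j. j < n \<Longrightarrow> 0 \<le> l' j"
    and near: "\<And>j. j < n \<Longrightarrow> \<bar>l j - l' j\<bar> \<le> 2 * c"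
    and L: "L = (\<Sum>j<n. l j)" and M: "M = (\<Sum>j<n. l' j)" and LM: "0 < M" "M \<le> L"
    and r: "r = 2 * real n * c / L"
  shows "l i / L \<le> l' i / M + r/2" and "l' i / M - r/2 - l' i / M * r \<le> l i / L"
proof -
  have c: "0 \<le> c" using near[OF n] by linarith
  have r0: "0 \<le> r" using r c LM by simp
  have q0: "0 \<le> l' i / M" using l'_nonneg[OF i] LM by simp
  have "l i / L \<le> l' i / M + r/2 \<and> l' i / M - r/2 - l' i / M * r \<le> l i / L"
  proof (cases "n = 1")
    case True
    then have "l i / L = 1" "l' i / M = 1" using i L M LM by auto
    then show ?thesis using r0 by simp
  next
    case False
    \<comment> \<open>\<open>l i / L - l' i / M = e - (l' i / M) * \<theta>\<close> with \<open>\<bar>e\<bar> \<le> 2c/L \<le> r/2\<close> and \<open>0 \<le> \<theta> \<le> r\<close>\<close>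
    define e where "e = (l i - l' i) / L"
    define \<theta> where "\<theta> = (L - M) / L"
    have diff: "l i / L - l' i / M = e - l' i / M * \<theta>"
      using LM unfolding e_def \<theta>_def by (simp add: field_simps)
    have "\<bar>e\<bar> \<le> 2 * c / L" unfolding e_def using near[OF i] LM by (simp add: abs_div divide_right_mono)
    also have "\<dots> \<le> r / 2"
      using False n c LM mult_right_mono[of 2 "real n" c] unfolding r by (simp add: divide_right_mono)
    finally have e: "\<bar>e\<bar> \<le> r / 2" .
    have "L - M = (\<Sum>j<n. l j - l' j)" using L M by (simp add: sum_subtractf)
    also have "\<dots> \<le> (\<Sum>j<n. 2 * c)" using near by (intro sum_mono) (auto simp: abs_le_iff)
    finally have "\<theta> \<le> r" unfolding \<theta>_def r using LM by (simp add: divide_right_mono)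
    moreover have "0 \<le> \<theta>" unfolding \<theta>_def using LM by simp
    ultimately have "0 \<le> l' i / M * \<theta>" and "l' i / M * \<theta> \<le> l' i / M * r"
      using q0 by (auto intro!: mult_left_mono simp del: times_divide_eq_left)
    then show ?thesis using diff e by linarith
  qed
  then show "l i / L \<le> l' i / M + r/2" "l' i / M - r/2 - l' i / M * r \<le> l i / L" by auto
qed

lemma relative_bar_len_bounds:
  assumes "is_barcode P" "i < length P"
  shows "0 \<le> bar_len (P ! i) / total_len P" "bar_len (P ! i) / total_len P \<le> 1"
proof -
  have nonneg: "0 \<le> bar_len (P ! j)" if "j < length P" for j
    using assms(1) that by (auto simp: is_barcode_def bar_len_def)
  then have "bar_len (P ! i) \<le> total_len P"
    unfolding total_len_def using assms(2) by (intro member_le_sum) auto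
  then show "0 \<le> bar_len (P ! i) / total_len P" "bar_len (P ! i) / total_len P \<le> 1"
    using nonneg[OF assms(2)] by (auto simp: divide_le_eq_1)
qed

lemma entropy_summary_L1_le_sum:
  fixes P Q :: barcode
  assumes len: "length P = n" "length Q = n" and bars: "is_barcode P" "is_barcode Q"
  shows "L1_norm (\<lambda>t. entropy_summary P t - entropy_summary Q t)
    \<le> (\<Sum>i<n. entr (bar_len (P ! i) / total_len P)
                 * (\<bar>fst (P ! i) - fst (Q ! i)\<bar> + \<bar>snd (P ! i) - snd (Q ! i)\<bar>)
             + \<bar>entr (bar_len (P ! i) / total_len P) - entr (bar_len (Q ! i) / total_len Q)\<bar>
                 * bar_len (Q ! i))"
proof -
  have "entropy_summary P t - entropy_summary Q t
      = (\<Sum>i<n. entr (bar_len (P ! i) / total_len P) * indicator {fst (P ! i)..snd (P ! i)} t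
               - entr (bar_len (Q ! i) / total_len Q) * indicator {fst (Q ! i)..snd (Q ! i)} t)" for t
    unfolding entropy_summary_eq_sum_indicator len by (simp add: sum_subtractf)
  then show ?thesis
    using relative_bar_len_bounds[OF bars(1)] bars(2) len
    by (auto intro!: L1_norm_sum_indicator_diff_le entr_nonneg simp: is_barcode_def bar_len_def)
qed

lemma entropy_summary_L1_le_aligned_of_le:
  fixes P Q :: barcode and c r :: real
  assumes len: "length P = n" "length Q = n" and n: "0 < n"
    and bars: "is_barcode P" "is_barcode Q"
    and near: "\<And>i. i < n \<Longrightarrow> bar_dist (P ! i) (Q ! i) \<le> c"
    and QP: "0 < total_len Q" "total_len Q \<le> total_len P"
    and r: "r = 2 * real n * c / total_len P" "r \<le> 1/4"
  shows "L1_norm (\<lambda>t. entropy_summary P t - entropy_summary Q t)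
           \<le> total_len Q * entr (2 * r) + 2 * c * ln n"
proof -
  define L where "L = total_len P"
  define M where "M = total_len Q"
  define l where "l i = bar_len (P ! i)" for i
  define l' where "l' i = bar_len (Q ! i)" for i
  have L: "L = (\<Sum>i<n. l i)" and M: "M = (\<Sum>i<n. l' i)"
    unfolding L_def M_def l_def l'_def total_len_def len by simp_all
  have rel: "0 \<le> l i / L" "l i / L \<le> 1" "0 \<le> l' i / M" "l' i / M \<le> 1" if "i < n" for i
    using relative_bar_len_bounds[OF bars(1)] relative_bar_len_bounds[OF bars(2)] that len
    unfolding l_def l'_def L_def M_def by auto
  have ends: "\<bar>fst (P ! i) - fst (Q ! i)\<bar> \<le> c" "\<bar>snd (P ! i) - snd (Q ! i)\<bar> \<le> c" if "i < n" for i
    using near[OF that] by (auto simp: bar_dist_def)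
  have c: "0 \<le> c" using ends(1)[OF n] by linarith
  have LM: "0 < M" "M \<le> L" and rL: "r = 2 * real n * c / L" using QP r unfolding L_def M_def by auto
  have near_entr: "\<bar>entr (l i / L) - entr (l' i / M)\<bar> \<le> entr (2 * r)" if i: "i < n" for i
  proof (rule abs_entr_diff_le_entr_double)
    have "0 \<le> l' j" "\<bar>l j - l' j\<bar> \<le> 2 * c" if "j < n" for j
      using ends[OF that] rel(3)[OF that] LM unfolding l_def l'_def bar_len_def
      by (auto simp: zero_le_divide_iff)
    then show "l i / L \<le> l' i / M + r/2" "l' i / M - r/2 - l' i / M * r \<le> l i / L"
      using relative_length_bounds[OF n i _ _ L M LM rL] by simp_all
    show "0 \<le> r" using r c QP by simp
  qed (use rel[OF i] r in auto)
  have "L1_norm (\<lambda>t. entropy_summary P t - entropy_summary Q t)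
      \<le> (\<Sum>i<n. entr (l i / L) * (\<bar>fst (P ! i) - fst (Q ! i)\<bar> + \<bar>snd (P ! i) - snd (Q ! i)\<bar>)
               + \<bar>entr (l i / L) - entr (l' i / M)\<bar> * l' i)"
    using entropy_summary_L1_le_sum[OF len bars] unfolding l_def l'_def L_def M_def .
  also have "\<dots> \<le> (\<Sum>i<n. entr (l i / L) * (2 * c) + entr (2 * r) * l' i)"
  proof (intro sum_mono add_mono mult_left_mono mult_right_mono)
    fix i assume "i \<in> {..<n}"
    then have i: "i < n" by simp
    show "\<bar>fst (P ! i) - fst (Q ! i)\<bar> + \<bar>snd (P ! i) - snd (Q ! i)\<bar> \<le> 2 * c"
      using ends[OF i] by simp
    show "0 \<le> entr (l i / L)" using rel(1,2)[OF i] by (rule entr_nonneg)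
    show "\<bar>entr (l i / L) - entr (l' i / M)\<bar> \<le> entr (2 * r)" by (rule near_entr[OF i])
    show "0 \<le> l' i" using rel(3)[OF i] LM by (simp add: zero_le_divide_iff)
  qed
  also have "\<dots> = 2 * c * (\<Sum>i<n. entr (l i / L)) + entr (2 * r) * M"
    by (simp add: M sum.distrib sum_distrib_left sum_distrib_right mult.commute)
  also have "\<dots> \<le> 2 * c * ln n + entr (2 * r) * M"
    using c rel L LM by (intro add_right_mono mult_left_mono sum_entr_le_ln n)
      (auto simp: sum_divide_distrib[symmetric])
  finally show ?thesis unfolding M_def by (simp add: algebra_simps)
qed

lemma bar_dist_commute: "bar_dist a b = bar_dist b a"
  by (simp add: bar_dist_def abs_minus_commute)

lemma L1_norm_diff_commute: "L1_norm (\<lambda>t. f t - g t) = L1_norm (\<lambda>t. g t - f t)"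
  by (simp add: L1_norm_def abs_minus_commute)

lemma entropy_summary_L1_le_aligned:
  fixes P Q :: barcode and c r :: real
  assumes len: "length P = n" "length Q = n" and n: "0 < n"
    and bars: "is_barcode P" "is_barcode Q"
    and near: "\<And>i. i < n \<Longrightarrow> bar_dist (P ! i) (Q ! i) \<le> c"
    and pos: "0 < total_len P" "0 < total_len Q"
    and r: "r = 2 * real n * c / max (total_len P) (total_len Q)" "r \<le> 1/4"
  shows "L1_norm (\<lambda>t. entropy_summary P t - entropy_summary Q t)
           \<le> min (total_len P) (total_len Q) * entr (2 * r) + 2 * c * ln n"
proof (cases "total_len Q \<le> total_len P")
  case True
  then show ?thesis using entropy_summary_L1_le_aligned_of_le[OF len n bars near] pos r by simp
next
  case False
  have "L1_norm (\<lambda>t. entropy_summary Q t - entropy_summary P t)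
      \<le> total_len P * entr (2 * r) + 2 * c * ln n"
    using False pos r near
    by (intro entropy_summary_L1_le_aligned_of_le[OF len(2,1) n bars(2,1)]) (auto simp: bar_dist_commute)
  then show ?thesis using False by (simp add: L1_norm_diff_commute[of "entropy_summary P"])
qed

section \<open>Attainment of the bottleneck distance\<close>

lemma match_cost_eq_Max_bar_dist:
  "match_cost n A B \<gamma> = (MAX i\<in>{..<n}. bar_dist (A ! i) (B ! \<gamma> i))"
  by (simp add: match_cost_def bar_dist_def)

lemma bar_dist_le_match_cost: "i < n \<Longrightarrow> bar_dist (A ! i) (B ! \<gamma> i) \<le> match_cost n A B \<gamma>"
  unfolding match_cost_eq_Max_bar_dist by (intro Max_ge) auto

lemma bar_dist_diagonal_midpoint_le:
  assumes "fst b \<le> snd b"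
  shows "bar_dist ((fst b + snd b) / 2, (fst b + snd b) / 2) b \<le> bar_dist (t, t) b"
  using assms by (auto simp: bar_dist_def max_def abs_if field_simps)

lemma nth_append_diagonal:
  "length A \<le> i \<Longrightarrow> i < length A + length ts
    \<Longrightarrow> (A @ map (\<lambda>t. (t, t)) ts) ! i = (ts ! (i - length A), ts ! (i - length A))"
  by (simp add: nth_append)

text \<open>Pads \<open>A\<close> to \<open>n\<close> bars by placing each padding bar \<open>i\<close> at the diagonal point nearest to
  its partner \<open>B ! \<gamma> i\<close>; for a fixed matching \<open>\<gamma>\<close> no other padding is cheaper.\<close>
definition diagonal_padding :: "barcode \<Rightarrow> barcode \<Rightarrow> nat \<Rightarrow> (nat \<Rightarrow> nat) \<Rightarrow> barcode" where
  "diagonal_padding A B n \<gamma> = A @ map (\<lambda>t. (t, t))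
     (map (\<lambda>i. (fst (B ! \<gamma> i) + snd (B ! \<gamma> i)) / 2) [length A..<n])"

lemma diagonal_padding_in_paddings:
  "length A \<le> n \<Longrightarrow> diagonal_padding A B n \<gamma> \<in> paddings A n"
  unfolding paddings_def diagonal_padding_def
  by (rule CollectI, rule exI[where x = "map (\<lambda>i. (fst (B ! \<gamma> i) + snd (B ! \<gamma> i)) / 2)
    [length A..<n]"]) simp

lemma nth_diagonal_padding:
  assumes "length A \<le> i" "i < n"
  shows "diagonal_padding A B n \<gamma> ! i
    = ((fst (B ! \<gamma> i) + snd (B ! \<gamma> i)) / 2, (fst (B ! \<gamma> i) + snd (B ! \<gamma> i)) / 2)"
  using assms by (simp add: diagonal_padding_def nth_append)

lemma bar_dist_diagonal_padding_le:
  assumes bars: "is_barcode A" "is_barcode B" and n: "n = max (length A) (length B)"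
    and \<gamma>: "\<gamma> permutes {..<n}" and A': "A' \<in> paddings A n" and B': "B' \<in> paddings B n"
    and i: "i < n"
  shows "bar_dist (diagonal_padding A B n \<gamma> ! i) (diagonal_padding B A n (inv \<gamma>) ! \<gamma> i)
           \<le> bar_dist (A' ! i) (B' ! \<gamma> i)"
proof -
  obtain ts where ts: "A' = A @ map (\<lambda>t. (t, t)) ts" "length A + length ts = n"
    using A' unfolding paddings_def by auto
  obtain us where us: "B' = B @ map (\<lambda>t. (t, t)) us" "length B + length us = n"
    using B' unfolding paddings_def by auto
  have \<gamma>i: "\<gamma> i < n" and inv: "inv \<gamma> (\<gamma> i) = i"
    using i permutes_in_image[OF \<gamma>] permutes_inverses(2)[OF \<gamma>] by auto
  show ?thesis
  proof (cases "i < length A")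
    case A_i: True
    then have A_i: "diagonal_padding A B n \<gamma> ! i = A ! i" "A' ! i = A ! i"
      by (simp_all add: diagonal_padding_def ts(1) nth_append)
    show ?thesis
    proof (cases "\<gamma> i < length B")
      case True
      then have "diagonal_padding B A n (inv \<gamma>) ! \<gamma> i = B' ! \<gamma> i"
        by (simp add: diagonal_padding_def us(1) nth_append)
      then show ?thesis by (simp add: A_i)
    next
      case False
      have "fst (A ! i) \<le> snd (A ! i)" using bars(1) \<open>i < length A\<close> by (auto simp: is_barcode_def)
      moreover have "B' ! \<gamma> i = (us ! (\<gamma> i - length B), us ! (\<gamma> i - length B))"
        using False \<gamma>i us by (simp add: nth_append_diagonal)
      ultimately show ?thesis
        using False \<gamma>i bar_dist_diagonal_midpoint_le[of "A ! i"]
        by (simp add: A_i nth_diagonal_padding inv bar_dist_commute)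
    qed
  next
    case False
    then have "length B = n" "length A \<le> i" using n i by auto
    then have B_\<gamma>i: "diagonal_padding B A n (inv \<gamma>) ! \<gamma> i = B ! \<gamma> i" "B' ! \<gamma> i = B ! \<gamma> i"
      using \<gamma>i by (simp_all add: diagonal_padding_def us(1) nth_append)
    have "fst (B ! \<gamma> i) \<le> snd (B ! \<gamma> i)"
      using bars(2) \<gamma>i \<open>length B = n\<close> by (auto simp: is_barcode_def)
    moreover have "A' ! i = (ts ! (i - length A), ts ! (i - length A))"
      using \<open>length A \<le> i\<close> i ts by (simp add: nth_append_diagonal)
    ultimately show ?thesis
      using i bar_dist_diagonal_midpoint_le[of "B ! \<gamma> i"] \<open>length A \<le> i\<close>
      by (simp add: B_\<gamma>i nth_diagonal_padding)
  qed
qed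

lemma match_cost_diagonal_padding_le:
  assumes "is_barcode A" "is_barcode B" "n = max (length A) (length B)"
    and "\<gamma> permutes {..<n}" "A' \<in> paddings A n" "B' \<in> paddings B n"
  shows "match_cost n (diagonal_padding A B n \<gamma>) (diagonal_padding B A n (inv \<gamma>)) \<gamma>
           \<le> match_cost n A' B' \<gamma>"
proof (cases "n = 0")
  case False
  have "bar_dist (diagonal_padding A B n \<gamma> ! i) (diagonal_padding B A n (inv \<gamma>) ! \<gamma> i)
      \<le> match_cost n A' B' \<gamma>" if "i < n" for i
    using bar_dist_diagonal_padding_le[OF assms that] bar_dist_le_match_cost[OF that]
    by (rule order_trans)
  with False show ?thesis
    unfolding match_cost_eq_Max_bar_dist[of n "diagonal_padding A B n \<gamma>"]
    by (intro Max.boundedI) auto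
qed (simp add: match_cost_def)

lemma d_inf_attained:
  assumes "is_barcode A" "is_barcode B"
  defines "n \<equiv> max (length A) (length B)"
  obtains A' B' \<gamma> where "A' \<in> paddings A n" "B' \<in> paddings B n" "\<gamma> permutes {..<n}"
    "match_cost n A' B' \<gamma> = d_inf A B"
proof -
  let ?cost = "\<lambda>\<gamma>. match_cost n (diagonal_padding A B n \<gamma>) (diagonal_padding B A n (inv \<gamma>)) \<gamma>"
  define G where "G = ?cost ` {\<gamma>. \<gamma> permutes {..<n}}"
  have G: "finite G" "G \<noteq> {}"
    unfolding G_def using permutes_id[of "{..<n}"] finite_permutations[of "{..<n}"] by blast+
  obtain \<gamma> where \<gamma>: "\<gamma> permutes {..<n}" "Min G = ?cost \<gamma>"
    using Min_in[OF G] unfolding G_def by auto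
  have pads: "diagonal_padding A B n \<gamma> \<in> paddings A n" "diagonal_padding B A n (inv \<gamma>) \<in> paddings B n"
    by (simp_all add: diagonal_padding_in_paddings n_def)
  define C where "C = {match_cost n A' B' \<gamma> | A' B' \<gamma>.
    A' \<in> paddings A n \<and> B' \<in> paddings B n \<and> \<gamma> permutes {..<n}}"
  have "d_inf A B = Inf C" unfolding d_inf_def C_def n_def Let_def ..
  also have "\<dots> = Min G"
  proof (rule cInf_eq_minimum)
    show "Min G \<in> C" unfolding C_def using pads \<gamma> by auto
  next
    fix x assume "x \<in> C"
    then obtain A' B' \<gamma>' where x: "x = match_cost n A' B' \<gamma>'" "A' \<in> paddings A n"
      "B' \<in> paddings B n" "\<gamma>' permutes {..<n}" unfolding C_def by blast
    have "Min G \<le> ?cost \<gamma>'" using G x(4) unfolding G_def by (intro Min_le) auto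
    also have "\<dots> \<le> x"
      using match_cost_diagonal_padding_le[OF assms(1,2) meta_eq_to_obj_eq[OF n_def] x(4,2,3)] x(1)
      by simp
    finally show "Min G \<le> x" .
  qed
  finally show ?thesis using that pads \<gamma> by simp
qed

lemma d_inf_nonneg:
  assumes "is_barcode A" "is_barcode B" "A \<noteq> []"
  shows "0 \<le> d_inf A B"
proof -
  obtain A' B' \<gamma> where cost: "match_cost (max (length A) (length B)) A' B' \<gamma> = d_inf A B"
    using d_inf_attained[OF assms(1,2)] .
  have "0 < max (length A) (length B)" using assms(3) by (simp add: less_max_iff_disj)
  then have "bar_dist (A' ! 0) (B' ! \<gamma> 0) \<le> d_inf A B"
    unfolding cost[symmetric] by (rule bar_dist_le_match_cost)
  moreover have "0 \<le> bar_dist (A' ! 0) (B' ! \<gamma> 0)" by (simp add: bar_dist_def)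
  ultimately show ?thesis by linarith
qed

lemma entropy_summary_L1_le_d_inf:
  assumes bars: "is_barcode A" "is_barcode B" and pos: "0 < total_len A" "0 < total_len B"
    and r: "r_inf A B \<le> 1/4"
  shows "L1_norm (\<lambda>t. entropy_summary A t - entropy_summary B t)
           \<le> min (total_len A) (total_len B) * entr (2 * r_inf A B)
             + 2 * d_inf A B * ln (max (length A) (length B))"
proof -
  define n where "n = max (length A) (length B)"
  obtain A' B' \<gamma> where A': "A' \<in> paddings A n" and B': "B' \<in> paddings B n"
    and \<gamma>: "\<gamma> permutes {..<n}" and cost: "match_cost n A' B' \<gamma> = d_inf A B"
    using d_inf_attained[OF bars] unfolding n_def by blast
  obtain ts us where A'_eq: "A' = A @ map (\<lambda>t. (t, t)) ts" "length A + length ts = n"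
    and B'_eq: "B' = B @ map (\<lambda>t. (t, t)) us" "length B + length us = n"
    using A' B' unfolding paddings_def by auto
  define Q where "Q = permute_list \<gamma> B'"
  have len: "length A' = n" "length B' = n" using A'_eq B'_eq by simp_all
  then have \<gamma>B': "\<gamma> permutes {..<length B'}" using \<gamma> by simp
  have "A \<noteq> []" using pos(1) by (auto simp: total_len_def)
  then have n: "0 < n" unfolding n_def by (simp add: less_max_iff_disj)
  have "L1_norm (\<lambda>t. entropy_summary A' t - entropy_summary Q t)
      \<le> min (total_len A') (total_len Q) * entr (2 * r_inf A B) + 2 * d_inf A B * ln n"
  proof (rule entropy_summary_L1_le_aligned[OF _ _ n])
    show "bar_dist (A' ! i) (Q ! i) \<le> d_inf A B" if "i < n" for i
      using bar_dist_le_match_cost[OF that, of A' B' \<gamma>] that \<gamma>B' len cost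
      by (simp add: Q_def permute_list_nth)
  qed (use A'_eq B'_eq \<gamma>B' bars pos r in \<open>auto simp: Q_def total_len_append_diagonal
      total_len_permute_list is_barcode_append_diagonal is_barcode_permute_list r_inf_def n_def\<close>)
  then show ?thesis
    using A'_eq B'_eq \<gamma>B' unfolding Q_def n_def
    by (simp add: total_len_append_diagonal total_len_permute_list entropy_summary_permute_list
      entropy_summary_append_diagonal)
qed

theorem theorem7:
  fixes A B :: barcode
  assumes "is_barcode A" and "is_barcode B"
    and "total_len A > 0" and "total_len B > 0"
    and "r_inf A B \<le> 1/4"
  shows "L1_norm (\<lambda>t. entropy_summary A t - entropy_summary B t)
           \<le> - 2 * min (total_len A) (total_len B) * r_inf A B * ln (2 * r_inf A B)
             + 2 * d_inf A B * ln (real (max (length A) (length B)))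
       \<and> - 2 * min (total_len A) (total_len B) * r_inf A B * ln (2 * r_inf A B)
             + 2 * d_inf A B * ln (real (max (length A) (length B)))
           \<le> 2 * r_inf A B * (- min (total_len A) (total_len B) * ln (2 * r_inf A B)
               + max (total_len A) (total_len B)
                 * ln (real (max (length A) (length B))) / real (max (length A) (length B)))"
proof -
  define n where "n = max (length A) (length B)"
  define d where "d = d_inf A B"
  have "A \<noteq> []" using assms(3) by (auto simp: total_len_def)
  then have n: "1 \<le> n" unfolding n_def by (simp add: Suc_le_eq less_max_iff_disj)
  have "0 \<le> d" unfolding d_def using d_inf_nonneg[OF assms(1,2) \<open>A \<noteq> []\<close>] .
  then have "0 \<le> d * ln n" using n by simp
  moreover have "2 * r_inf A B * (max (total_len A) (total_len B) * ln n / n) = 4 * d * ln n"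
    using assms(3) n unfolding r_inf_def d_def n_def by (simp add: field_simps)
  ultimately have "2 * d * ln n \<le> 2 * r_inf A B * (max (total_len A) (total_len B) * ln n / n)"
    by simp
  then show ?thesis
    using entropy_summary_L1_le_d_inf[OF assms] unfolding d_def n_def entr_def
    by (simp add: algebra_simps)
qed

end
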